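(* Let $i(C,R)$ be an initial rule and $\mathrm{H}:=\mathrm{H}(\mathbf{G}(i(C,R)))$. If $\mathrm{H}'$ is a fracturable subset of $\mathrm{H}$ (in $\mathsf{DG}(\mathrm H)$), then $i(C,R)\preceq\ \triangleright^{1} i(C,R)\ominus\mathbf{G}(\mathrm{H}')\ \triangleright^{0}\mathrm{H}'$; i.e. every conclusion of $i(C,R)$ can be derived by one application of $i(C,R)\ominus\mathbf G(\mathrm H')$ followed by zero or more applications of rules from $\mathrm H'$.
   Context: Fix a countably infinite set $\mathtt{S}$ of sequents (atomic labels), a set $\mathcal{U}$ of vertices, and a non-empty finite set $\mathtt{E}$ of edge types. A g-sequent is $\mathcal{G}=(\mathcal{V},\mathcal{E},\mathcal{L})$ with $\mathcal{V}\subseteq\mathcal{U}$, $\mathcal{E}=\{\mathcal{E}_a\mid a\in\mathtt{E}\}$, $\mathcal{E}_a\subseteq\mathcal{V}\times\mathcal{V}$, $\mathcal{L}:\mathcal{V}\to\mathtt{S}$; written $\Gamma\vdash\Delta$ with $\Gamma$ the set of edge atoms $w\mathcal{E}_a u$ and $\Delta$ the set of prefixed sequents $w:S$; $\mathtt{PS}=\mathcal U\times\mathtt S$; commas denote disjoint union. Let $\overline{\mathtt E}=\{\bar a\mid a\in\mathtt E\}$, $\bar{\bar z}=z$, $\overline{x_1\cdots x_n}=\bar x_n\cdots\bar x_1$, $\varepsilon$ empty string. Paths: $\mathcal{G}\models u\xrightarrow{a}w$ iff $(u,w)\in\mathcal{E}_a$; $u\xrightarrow{\bar a}w$ iff $(w,u)\in\mathcal{E}_a$;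 $u\xrightarrow{\varepsilon}w$ iff $u=w$; $u\xrightarrow{xs}w$ iff some $v$ has $u\xrightarrow{x}v$, $v\xrightarrow{s}w$; $u\xrightarrow{\mathscr L}w$ iff $u\xrightarrow{s}w$ for some $s\in\mathscr L$. An $\mathtt E$-system is a finite set $\mathbf G$ of production rules $x\longrightarrow t$ ($x\in\mathtt E\cup\overline{\mathtt E}$) with $x\longrightarrow t\in\mathbf G$ iff $\bar x\longrightarrow\bar t\in\mathbf G$; $\mathbf G(s)=\{t\mid s\longrightarrow^*_{\mathbf G}t\}$. For $p=x\longrightarrow t$, $\bar p=\bar x\longrightarrow\bar t$; $(p,\bar p)$ is a production pair; $P(\mathbf G)$ the set of such pairs. A constraint is a finite tree $C=(V,E,L)$, $V\subseteq\mathcal U$, each edge labelled $L(w,u)=\mathbf G'(a)$ ($a\in\mathtt E$, $\mathbf G'$ an $\mathtt E$-system, said to participate in $C$); $\mathcal G$ satisfies $C$ iff $V\subseteq\mathcal U(\mathcal G)$ and $\mathcal G\models w\xrightarrow{\mathbf G'(a)}u$ for each edge. A sequent constraint $R\subseteq\mathtt S^n\times 2^{\mathtt{PS}}$ is satisfied by $S_1,\dots,S_n,\Delta$ iff $(S_{\pi(1)},\dots,S_{\pi(n)},\Delta)\in R$ for some permutation $\pi$. An initial rule $i(C,R)$ has no premises; its conclusions are the $\Gamma\vdash\Delta=(\mathcal V,\mathcal E,\mathcal L)$ satisfying $C$, with $V=\{w_1,\dots,w_n\}$, such that $\mathcal L(w_1),\dots,\mathcal L(w_n)$ and $\Delta\setminus\{w_i:\mathcal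 L(w_i)\}$ satisfy $R$. $\mathbf G(i(C,R))$ is the union of all $\mathtt E$-systems participating in $C$. Fracture: $C\ominus\mathbf G$ replaces each label $\mathbf G'(a)$ by $(\mathbf G'\setminus\mathbf G)(a)$, and $i(C,R)\ominus\mathbf G=i(C\ominus\mathbf G,R)$. Horn rules: for $s=x_1\cdots x_n$, $w\mathcal E_s u$ abbreviates atoms $w\mathcal E_{x_1}v_1,\dots,v_{n-1}\mathcal E_{x_n}u$ ($v\mathcal E_{\bar a}z$ means $z\mathcal E_a v$; $w\mathcal E_\varepsilon u$ means $w=u$). Forward Horn rule $h_f$: premise $\Gamma,w\mathcal{E}_s u,w\mathcal{E}_a u\vdash\Delta$, conclusion $\Gamma,w\mathcal{E}_s u\vdash\Delta$; backward $h_b$: same with $u\mathcal E_a w$ instead of $w\mathcal E_a u$. $\mathbf{G}(h_f)=\{a\longrightarrow s,\bar a\longrightarrow\bar s\}$, $\mathbf{G}(h_b)=\{\bar a\longrightarrow s,a\longrightarrow\bar s\}$, $\mathbf G(\mathrm H)=\bigcup_{h\in\mathrm H}\mathbf G(h)$. For a pair $(p,\bar p)$ with $p=a\longrightarrow s$ (resp. $\bar a\longrightarrow s$), $a\in\mathtt E$, $\mathrm H(p,\bar p)$ is the corresponding forward (resp. backward) Horn rule; $\mathrm H(\mathbf G)=\bigcup_{(p,\bar p)\in P(\mathbf G)}\mathrm H(p,\bar p)$. Dependency graph: for distinct pairs with $p=x\longrightarrow s$, $p'=y\longrightarrow t$, $(p,\bar p)\sqsubset(p',\bar p')$ iff $s$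 or $\bar s$ contains $y$; $\sqsubseteq$ its reflexive-transitive closure; $\mathsf{DG}(\mathrm H)=(\mathrm H,\sqsubseteq')$ with $h\sqsubseteq'h'$ iff the production pair of $h$ is $\sqsubseteq$ that of $h'$. $V'\subseteq V$ is fracturable in $(V,\sqsubseteq)$ iff no $v\in V'$, $v'\in V\setminus V'$ have $v\sqsubseteq v'$. Simulation: $\mathrm R_1\preceq\mathrm R_2$ iff whatever is derivable from given g-sequents using $\mathrm R_1$ is derivable from them using $\mathrm R_2$. An ordered rule set $\triangleright^{i_1}\mathrm R_1\cdots\triangleright^{i_k}\mathrm R_k$ ($i_j\in\{0,1\}$) is $\mathrm R_1\cup\dots\cup\mathrm R_k$ restricted to derivations that (top to bottom) first apply at least $i_1$ rules from $\mathrm R_1$, then at least $i_2$ rules from $\mathrm R_2$, etc. *)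

theory Defs
  imports Main "HOL-Library.Multiset" "HOL-Library.Countable"
begin

text \<open>Letters of E \<union> E-bar: Fwd a stands for a, Bwd a for a-bar.\<close>
datatype 'e letter = Fwd 'e | Bwd 'e

fun barl :: "'e letter \<Rightarrow> 'e letter" where
  "barl (Fwd a) = Bwd a" | "barl (Bwd a) = Fwd a"

definition bars :: "'e letter list \<Rightarrow> 'e letter list" where
  "bars s = rev (map barl s)"

type_synonym 'e production = "'e letter \<times> 'e letter list"

definition is_Esys :: "'e production set \<Rightarrow> bool" where
  "is_Esys G \<longleftrightarrow> finite G \<and> (\<forall>x t. (x, t) \<in> G \<longrightarrow> (barl x, bars t) \<in> G)"

definition rw_step :: "'e production set \<Rightarrow> 'e letter list \<Rightarrow> 'e letter list \<Rightarrow> bool" where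
  "rw_step G s t \<longleftrightarrow> (\<exists>xs x ys r. s = xs @ [x] @ ys \<and> (x, r) \<in> G \<and> t = xs @ r @ ys)"

definition lang :: "'e production set \<Rightarrow> 'e letter list \<Rightarrow> 'e letter list set" where
  "lang G s = {t. (rw_step G)\<^sup>*\<^sup>* s t}"

record ('u, 'e, 's) gseq =
  gV :: "'u set"
  gE :: "'e \<Rightarrow> ('u \<times> 'u) set"
  gL :: "'u \<Rightarrow> 's"

definition gseq_wf :: "('u, 'e, 's) gseq \<Rightarrow> bool" where
  "gseq_wf G \<longleftrightarrow> (\<forall>a. gE G a \<subseteq> gV G \<times> gV G)"

definition Delta :: "('u, 'e, 's) gseq \<Rightarrow> ('u \<times> 's) set" where
  "Delta G = {(w, gL G w) | w. w \<in> gV G}"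

fun lstep :: "('u, 'e, 's) gseq \<Rightarrow> 'u \<Rightarrow> 'e letter \<Rightarrow> 'u \<Rightarrow> bool" where
  "lstep G u (Fwd a) w \<longleftrightarrow> (u, w) \<in> gE G a"
| "lstep G u (Bwd a) w \<longleftrightarrow> (w, u) \<in> gE G a"

fun path :: "('u, 'e, 's) gseq \<Rightarrow> 'u \<Rightarrow> 'e letter list \<Rightarrow> 'u \<Rightarrow> bool" where
  "path G u [] w \<longleftrightarrow> u = w"
| "path G u (x # s) w \<longleftrightarrow> (\<exists>v. lstep G u x v \<and> path G v s w)"

definition path_lang :: "('u, 'e, 's) gseq \<Rightarrow> 'u \<Rightarrow> 'e letter list set \<Rightarrow> 'u \<Rightarrow> bool" where
  "path_lang G u L w \<longleftrightarrow> (\<exists>s\<in>L. path G u s w)"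

text \<open>A constraint: vertices, (directed) edges, and a label G'(a) on each edge,
  represented as the pair (G', a).\<close>
record ('u, 'e) constraint =
  cV :: "'u set"
  cE :: "('u \<times> 'u) set"
  cL :: "'u \<times> 'u \<Rightarrow> 'e production set \<times> 'e"

definition is_tree :: "'u set \<Rightarrow> ('u \<times> 'u) set \<Rightarrow> bool" where
  "is_tree V E \<longleftrightarrow> finite V \<and> V \<noteq> {} \<and> E \<subseteq> V \<times> V
     \<and> (\<forall>w u. (w, u) \<in> E \<longrightarrow> w \<noteq> u \<and> (u, w) \<notin> E)
     \<and> card E + 1 = card V
     \<and> (\<forall>x\<in>V. \<forall>y\<in>V. (x, y) \<in> (E \<union> E\<inverse>)\<^sup>*)"

definition constraint_wf :: "('u, 'e) constraint \<Rightarrow> bool" where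
  "constraint_wf C \<longleftrightarrow> is_tree (cV C) (cE C) \<and> (\<forall>e\<in>cE C. is_Esys (fst (cL C e)))"

definition satisfies :: "('u, 'e, 's) gseq \<Rightarrow> ('u, 'e) constraint \<Rightarrow> bool" where
  "satisfies G C \<longleftrightarrow> cV C \<subseteq> gV G \<and>
     (\<forall>w u. (w, u) \<in> cE C \<longrightarrow>
        path_lang G w (lang (fst (cL C (w, u))) [Fwd (snd (cL C (w, u)))]) u)"

text \<open>Sequent constraints R \<subseteq> S^n \<times> 2^PS, lists of length n.\<close>
definition sat_seqc :: "('s list \<times> ('u \<times> 's) set) set \<Rightarrow> 's list \<Rightarrow> ('u \<times> 's) set \<Rightarrow> bool" where
  "sat_seqc R Ss D \<longleftrightarrow> (\<exists>l. mset l = mset Ss \<and> (l, D) \<in> R)"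

definition init_concl :: "('u, 'e) constraint \<Rightarrow> ('s list \<times> ('u \<times> 's) set) set
    \<Rightarrow> ('u, 'e, 's) gseq \<Rightarrow> bool" where
  "init_concl C R G \<longleftrightarrow> gseq_wf G \<and> satisfies G C \<and>
     (\<exists>ws. distinct ws \<and> set ws = cV C \<and>
        sat_seqc R (map (gL G) ws) (Delta G - {(w, gL G w) | w. w \<in> cV C}))"

definition Gsys_init :: "('u, 'e) constraint \<Rightarrow> 'e production set" where
  "Gsys_init C = (\<Union>e\<in>cE C. fst (cL C e))"

definition fracture :: "('u, 'e) constraint \<Rightarrow> 'e production set \<Rightarrow> ('u, 'e) constraint" where
  "fracture C G = C\<lparr>cL := (\<lambda>e. (fst (cL C e) - G, snd (cL C e)))\<rparr>"

text \<open>HF a s: forward Horn rule (a --> s); HB a s: backward Horn rule (a-bar --> s).\<close>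
datatype 'e horn = HF 'e "'e letter list" | HB 'e "'e letter list"

fun Gh :: "'e horn \<Rightarrow> 'e production set" where
  "Gh (HF a s) = {(Fwd a, s), (Bwd a, bars s)}"
| "Gh (HB a s) = {(Bwd a, s), (Fwd a, bars s)}"

definition GH :: "'e horn set \<Rightarrow> 'e production set" where
  "GH H = (\<Union>h\<in>H. Gh h)"

fun horn_of :: "'e production \<Rightarrow> 'e horn" where
  "horn_of (Fwd a, s) = HF a s"
| "horn_of (Bwd a, s) = HB a s"

definition Hset :: "'e production set \<Rightarrow> 'e horn set" where
  "Hset G = horn_of ` G"

text \<open>Application of a Horn rule: premise P, conclusion Q (commas = disjoint union).\<close>
fun horn_app :: "'e horn \<Rightarrow> ('u, 'e, 's) gseq \<Rightarrow> ('u, 'e, 's) gseq \<Rightarrow> bool" where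
  "horn_app (HF a s) P Q \<longleftrightarrow> gseq_wf P \<and> gseq_wf Q \<and> gV P = gV Q \<and> gL P = gL Q \<and>
     (\<exists>w u. path Q w s u \<and> (w, u) \<notin> gE Q a \<and>
        gE P = (gE Q)(a := gE Q a \<union> {(w, u)}))"
| "horn_app (HB a s) P Q \<longleftrightarrow> gseq_wf P \<and> gseq_wf Q \<and> gV P = gV Q \<and> gL P = gL Q \<and>
     (\<exists>w u. path Q w s u \<and> (u, w) \<notin> gE Q a \<and>
        gE P = (gE Q)(a := gE Q a \<union> {(u, w)}))"

definition horn_derives :: "'e horn set \<Rightarrow> ('u, 'e, 's) gseq \<Rightarrow> ('u, 'e, 's) gseq \<Rightarrow> bool" where
  "horn_derives H = (\<lambda>P Q. \<exists>h\<in>H. horn_app h P Q)\<^sup>*\<^sup>*"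

text \<open>Production pairs are represented as the sets {p, p-bar}. For distinct pairs,
  P \<sqsubset> P' iff for p = x --> s in P and p' = y --> t in P', s or s-bar contains y.\<close>
definition pdep :: "'e production set \<Rightarrow> 'e production set \<Rightarrow> bool" where
  "pdep P P' \<longleftrightarrow> P \<noteq> P' \<and> (\<exists>x s y t. (x, s) \<in> P \<and> (y, t) \<in> P' \<and>
      (y \<in> set s \<or> y \<in> set (bars s)))"

definition dg_le :: "'e horn set \<Rightarrow> 'e horn \<Rightarrow> 'e horn \<Rightarrow> bool" where
  "dg_le H h h' \<longleftrightarrow>
     (\<lambda>P P'. P \<in> Gh ` H \<and> P' \<in> Gh ` H \<and> pdep P P')\<^sup>*\<^sup>* (Gh h) (Gh h')"

definition fracturable :: "'e horn set \<Rightarrow> 'e horn set \<Rightarrow> bool" where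
  "fracturable H H' \<longleftrightarrow> H' \<subseteq> H \<and>
     \<not> (\<exists>v\<in>H'. \<exists>v'\<in>H - H'. dg_le H v v')"

end

theory Submission
  imports Defs
begin

text \<open>
  Let G be a conclusion of i(C,R). Each edge of C is witnessed in G by a path labelled
  with a word s derived from a letter a. Fracturability of H' means that no right-hand
  side of a production of G(H') contains the left-hand side of a production outside G(H').
  Hence every derivation a \<longrightarrow>* s can be reordered to apply the productions outside G(H')
  first, a \<longrightarrow>* s' \<longrightarrow>* s. The tail s' \<longrightarrow>* s is undone by Horn rules of H', read
  bottom-up: the rule of x \<longrightarrow> r adds an x-edge across an r-path. Treating all edges of C
  in turn yields a g-sequent G0 with the vertices and labels of G that satisfies
  C \<ominus> G(H'), so G0 is a conclusion of the fractured rule and G is derived from it by H'.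
\<close>

lemma append_eq_append_Cons_not_in:
  assumes "r @ ys = us @ z # bs" and "z \<notin> set r"
  shows "\<exists>cs. us = r @ cs \<and> ys = cs @ z # bs"
  using assms
proof (induction r arbitrary: us)
  case (Cons x r)
  then show ?case by (cases us) auto
qed auto

lemma append_eq_around_not_in:
  assumes eq: "xs @ r @ ys = as @ z # bs" and z: "z \<notin> set r"
  shows "(\<exists>cs. xs = as @ z # cs \<and> bs = cs @ r @ ys) \<or> (\<exists>cs. ys = cs @ z # bs \<and> as = xs @ r @ cs)"
  using eq
proof (induction xs arbitrary: as)
  case Nil
  then show ?case using append_eq_append_Cons_not_in[OF _ z] by (metis self_append_conv2)
next
  case (Cons x xs)
  then show ?case by (cases as) auto
qed

lemma rw_stepI: "(x, r) \<in> G \<Longrightarrow> rw_step G (xs @ x # ys) (xs @ r @ ys)"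
  unfolding rw_step_def by auto

lemma rw_step_Un: "rw_step (N \<union> P) s t \<longleftrightarrow> rw_step N s t \<or> rw_step P s t"
  unfolding rw_step_def by blast

lemma rw_step_commute:
  assumes "rw_step P u v" and "rw_step N v w"
    and indep: "\<forall>(x, r)\<in>P. \<forall>(z, q)\<in>N. z \<notin> set r"
  shows "\<exists>v'. rw_step N u v' \<and> rw_step P v' w"
proof -
  obtain xs x ys r where u: "u = xs @ x # ys" and xr: "(x, r) \<in> P" and v: "v = xs @ r @ ys"
    using assms(1) unfolding rw_step_def by auto
  obtain as z bs q where v': "v = as @ z # bs" and zq: "(z, q) \<in> N" and w: "w = as @ q @ bs"
    using assms(2) unfolding rw_step_def by auto
  have "z \<notin> set r" using indep xr zq by blast
  with v v' consider
      (left) cs where "xs = as @ z # cs" "bs = cs @ r @ ys"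
    | (right) cs where "ys = cs @ z # bs" "as = xs @ r @ cs"
    using append_eq_around_not_in by metis
  then show ?thesis
  proof cases
    case left
    then show ?thesis
      using rw_stepI[OF zq, of as "cs @ x # ys"] rw_stepI[OF xr, of "as @ q @ cs" ys] u w by auto
  next
    case right
    then show ?thesis
      using rw_stepI[OF zq, of "xs @ x # cs" bs] rw_stepI[OF xr, of xs "cs @ q @ bs"] u w by auto
  qed
qed

lemma rtranclp_rw_step_commute:
  assumes "(rw_step P)\<^sup>*\<^sup>* u v" and "rw_step N v w"
    and indep: "\<forall>(x, r)\<in>P. \<forall>(z, q)\<in>N. z \<notin> set r"
  shows "\<exists>v'. rw_step N u v' \<and> (rw_step P)\<^sup>*\<^sup>* v' w"
  using assms(1,2)
proof (induction rule: converse_rtranclp_induct)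
  case (step u u1)
  then obtain v1 where "rw_step N u1 v1" "(rw_step P)\<^sup>*\<^sup>* v1 w" by blast
  moreover obtain v' where "rw_step N u v'" "rw_step P v' v1"
    using rw_step_commute[OF step(1) calculation(1) indep] by blast
  ultimately show ?case by (meson converse_rtranclp_into_rtranclp)
qed auto

lemma lang_Un_postpone:
  assumes "t \<in> lang (N \<union> P) s"
    and indep: "\<forall>(x, r)\<in>P. \<forall>(z, q)\<in>N. z \<notin> set r"
  shows "\<exists>s'\<in>lang N s. t \<in> lang P s'"
  using assms(1) unfolding lang_def mem_Collect_eq
proof (induction rule: rtranclp_induct)
  case (step t t2)
  then obtain s' where s': "(rw_step N)\<^sup>*\<^sup>* s s'" "(rw_step P)\<^sup>*\<^sup>* s' t" by blast
  from step(2) consider (N_step) "rw_step N t t2" | (P_step) "rw_step P t t2"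
    by (auto simp: rw_step_Un)
  then show ?case
  proof cases
    case N_step
    then obtain v' where "rw_step N s' v'" "(rw_step P)\<^sup>*\<^sup>* v' t2"
      using rtranclp_rw_step_commute[OF s'(2) _ indep] by blast
    then show ?thesis using rtranclp.rtrancl_into_rtrancl[OF s'(1)] by blast
  next
    case P_step
    then show ?thesis using s'(1) rtranclp.rtrancl_into_rtrancl[OF s'(2)] by blast
  qed
qed auto

lemma barl_barl [simp]: "barl (barl x) = x"
  by (cases x) auto

lemma bars_bars [simp]: "bars (bars s) = s"
  by (simp add: bars_def rev_map comp_def)

lemma Gh_horn_of: "p \<in> Gh h \<Longrightarrow> Gh (horn_of p) = Gh h"
  by (cases h) auto

lemma mem_Gh_horn_of: "p \<in> Gh (horn_of p)"
  by (cases p rule: horn_of.cases) auto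

lemma fracturable_dg_le_mem:
  "fracturable H H' \<Longrightarrow> h \<in> H' \<Longrightarrow> h' \<in> H \<Longrightarrow> dg_le H h h' \<Longrightarrow> h' \<in> H'"
  unfolding fracturable_def by blast

lemma fracturable_horn_of_mem:
  assumes fr: "fracturable (Hset G) H'" and "p \<in> G" and "p \<in> GH H'"
  shows "horn_of p \<in> H'"
proof -
  obtain h where h: "h \<in> H'" "p \<in> Gh h" using assms(3) by (auto simp: GH_def)
  have "horn_of p \<in> Hset G" using assms(2) by (simp add: Hset_def)
  moreover have "dg_le (Hset G) h (horn_of p)" using Gh_horn_of[OF h(2)] by (simp add: dg_le_def)
  ultimately show ?thesis using fracturable_dg_le_mem[OF fr h(1)] by blast
qed

lemma fracturable_GH_closed:
  assumes fr: "fracturable (Hset G) H'"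
    and "(x, r) \<in> GH H'" and "y \<in> set r" and "(y, t) \<in> G"
  shows "(y, t) \<in> GH H'"
proof -
  obtain h where h: "h \<in> H'" "(x, r) \<in> Gh h" using assms(2) by (auto simp: GH_def)
  define h' where "h' = horn_of (y, t)"
  have h'H: "h' \<in> Hset G" using assms(4) by (simp add: Hset_def h'_def)
  have hH: "h \<in> Hset G" using h(1) fr by (auto simp: fracturable_def)
  have yt_h': "(y, t) \<in> Gh h'" unfolding h'_def by (rule mem_Gh_horn_of)
  have "dg_le (Hset G) h h'"
  proof (cases "Gh h = Gh h'")
    case True
    then show ?thesis by (simp add: dg_le_def)
  next
    case False
    then have "pdep (Gh h) (Gh h')" unfolding pdep_def using h(2) yt_h' assms(3) by blast
    then show ?thesis unfolding dg_le_def using hH h'H by (intro r_into_rtranclp) auto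
  qed
  then have "h' \<in> H'" using fracturable_dg_le_mem[OF fr h(1) h'H] by blast
  then show ?thesis using yt_h' by (auto simp: GH_def)
qed

lemma lang_fracture:
  assumes fr: "fracturable (Hset G) H'" and sub: "G' \<subseteq> G" and t: "t \<in> lang G' s"
  shows "\<exists>s'\<in>lang (G' - GH H') s. t \<in> lang (G' \<inter> GH H') s'"
proof (rule lang_Un_postpone)
  show "t \<in> lang ((G' - GH H') \<union> (G' \<inter> GH H')) s" using t by (simp add: Un_Diff_Int)
  show "\<forall>(x, r)\<in>G' \<inter> GH H'. \<forall>(z, q)\<in>G' - GH H'. z \<notin> set r"
    using fracturable_GH_closed[OF fr] sub by blast
qed

lemma path_append: "path Q v (s1 @ s2) v' \<longleftrightarrow> (\<exists>m. path Q v s1 m \<and> path Q m s2 v')"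
  by (induction s1 arbitrary: v) auto

lemma path_mono:
  assumes "\<forall>a. gE Q a \<subseteq> gE P a" and "path Q v s v'"
  shows "path P v s v'"
  using assms(2)
proof (induction s arbitrary: v)
  case (Cons x s)
  then obtain m where "lstep Q v x m" "path Q m s v'" by auto
  moreover have "lstep P v x m" using assms(1) calculation(1) by (cases x) auto
  ultimately show ?case using Cons.IH by auto
qed simp

lemma path_lang_mono:
  assumes "\<forall>a. gE Q a \<subseteq> gE P a" and "path_lang Q v L v'"
  shows "path_lang P v L v'"
  using path_mono[OF assms(1)] assms(2) unfolding path_lang_def by blast

lemma path_target_in_gV:
  assumes "gseq_wf Q" and "v \<in> gV Q" and "path Q v s v'"
  shows "v' \<in> gV Q"
  using assms(2,3)
proof (induction s arbitrary: v)
  case (Cons x s)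
  then obtain m where m: "lstep Q v x m" "path Q m s v'" by auto
  have "m \<in> gV Q" using m(1) assms(1) by (cases x) (auto simp: gseq_wf_def)
  then show ?case using Cons.IH m(2) by blast
qed simp

lemma horn_derives_refl: "horn_derives H Q Q"
  by (simp add: horn_derives_def)

lemma horn_derives_trans:
  "horn_derives H P Q \<Longrightarrow> horn_derives H Q R \<Longrightarrow> horn_derives H P R"
  unfolding horn_derives_def by (rule rtranclp_trans)

lemma horn_derives_single: "h \<in> H \<Longrightarrow> horn_app h P Q \<Longrightarrow> horn_derives H P Q"
  unfolding horn_derives_def by (rule r_into_rtranclp) blast

lemma horn_app_extends:
  "horn_app h P Q \<Longrightarrow> gseq_wf P \<and> gV P = gV Q \<and> gL P = gL Q \<and> (\<forall>a. gE Q a \<subseteq> gE P a)"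
  by (cases h) auto

lemma horn_derives_extends:
  assumes "horn_derives H P Q" and "gseq_wf Q"
  shows "gseq_wf P \<and> gV P = gV Q \<and> gL P = gL Q \<and> (\<forall>a. gE Q a \<subseteq> gE P a)"
  using assms unfolding horn_derives_def
proof (induction rule: rtranclp_induct)
  case (step Y Z)
  then have "gseq_wf Y \<and> gV Y = gV Z \<and> gL Y = gL Z \<and> (\<forall>a. gE Z a \<subseteq> gE Y a)"
    using horn_app_extends by blast
  with step.IH show ?case by (metis order_trans)
qed simp

lemma gseq_wf_add_edge:
  assumes "gseq_wf Q" and "w \<in> gV Q" and "u \<in> gV Q"
  shows "gseq_wf (Q\<lparr>gE := (gE Q)(a := gE Q a \<union> {(w, u)})\<rparr>)"
  using assms unfolding gseq_wf_def by auto

lemma horn_app_HF_add_edge: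
  assumes "gseq_wf Q" and "w \<in> gV Q" and "u \<in> gV Q" and "path Q w s u" and "(w, u) \<notin> gE Q a"
  shows "horn_app (HF a s) (Q\<lparr>gE := (gE Q)(a := gE Q a \<union> {(w, u)})\<rparr>) Q"
  unfolding horn_app.simps using assms gseq_wf_add_edge[OF assms(1-3)]
  by (intro conjI exI[of _ w] exI[of _ u]) simp_all

lemma horn_app_HB_add_edge:
  assumes "gseq_wf Q" and "w \<in> gV Q" and "u \<in> gV Q" and "path Q w s u" and "(u, w) \<notin> gE Q a"
  shows "horn_app (HB a s) (Q\<lparr>gE := (gE Q)(a := gE Q a \<union> {(u, w)})\<rparr>) Q"
  unfolding horn_app.simps using assms gseq_wf_add_edge[OF assms(1,3,2)]
  by (intro conjI exI[of _ w] exI[of _ u]) simp_all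

text \<open>A Horn rule undoes one rewrite step x \<longrightarrow> t: it adds the x-edge across an existing t-path.\<close>

lemma horn_derives_lstep:
  assumes wf: "gseq_wf Q" and v: "v \<in> gV Q" and t: "path Q v t v'"
    and H: "horn_of (x, t) \<in> H"
  shows "\<exists>P. horn_derives H P Q \<and> lstep P v x v'"
proof (cases "lstep Q v x v'")
  case True
  then show ?thesis using horn_derives_refl by blast
next
  case False
  have v': "v' \<in> gV Q" using path_target_in_gV[OF wf v t] .
  show ?thesis
  proof (cases x)
    case (Fwd a)
    let ?P = "Q\<lparr>gE := (gE Q)(a := gE Q a \<union> {(v, v')})\<rparr>"
    have "HF a t \<in> H" using H Fwd by simp
    moreover have "horn_app (HF a t) ?P Q" using horn_app_HF_add_edge[OF wf v v' t] False Fwd by simp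
    ultimately have "horn_derives H ?P Q" by (rule horn_derives_single)
    moreover have "lstep ?P v x v'" using Fwd by simp
    ultimately show ?thesis by blast
  next
    case (Bwd a)
    let ?P = "Q\<lparr>gE := (gE Q)(a := gE Q a \<union> {(v', v)})\<rparr>"
    have "HB a t \<in> H" using H Bwd by simp
    moreover have "horn_app (HB a t) ?P Q" using horn_app_HB_add_edge[OF wf v v' t] False Bwd by simp
    ultimately have "horn_derives H ?P Q" by (rule horn_derives_single)
    moreover have "lstep ?P v x v'" using Bwd by simp
    ultimately show ?thesis by blast
  qed
qed

lemma horn_derives_path_of_lang:
  assumes "t \<in> lang G s" and H: "\<forall>p\<in>G. horn_of p \<in> H"
    and "gseq_wf Q" and "v \<in> gV Q" and "path Q v t v'"
  shows "\<exists>P. horn_derives H P Q \<and> path P v s v'"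
  using assms(1,3-) unfolding lang_def mem_Collect_eq
proof (induction arbitrary: Q rule: converse_rtranclp_induct)
  case base
  then show ?case using horn_derives_refl by blast
next
  case (step s s1)
  obtain Q1 where Q1: "horn_derives H Q1 Q" "path Q1 v s1 v'"
    using step.IH[OF step.prems] by blast
  obtain xs x ys r where s: "s = xs @ x # ys" and xr: "(x, r) \<in> G" and s1: "s1 = xs @ r @ ys"
    using step.hyps(1) unfolding rw_step_def by auto
  obtain m1 m2 where m: "path Q1 v xs m1" "path Q1 m1 r m2" "path Q1 m2 ys v'"
    using Q1(2) unfolding s1 path_append by blast
  have wf1: "gseq_wf Q1" and V1: "gV Q1 = gV Q"
    using horn_derives_extends[OF Q1(1) step.prems(1)] by simp_all
  have "m1 \<in> gV Q1" using path_target_in_gV[OF wf1 _ m(1)] step.prems(2) V1 by simp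
  then obtain Q2 where Q2: "horn_derives H Q2 Q1" "lstep Q2 m1 x m2"
    using horn_derives_lstep[OF wf1 _ m(2)] H xr by blast
  have "\<forall>a. gE Q1 a \<subseteq> gE Q2 a" using horn_derives_extends[OF Q2(1) wf1] by simp
  then have "path Q2 v s v'"
    unfolding s path_append using Q2(2) path_mono m(1,3) by fastforce
  then show ?case using horn_derives_trans[OF Q2(1) Q1(1)] by blast
qed

lemma path_lang_fracture:
  assumes fr: "fracturable (Hset G) H'" and sub: "G' \<subseteq> G"
    and wf: "gseq_wf Q" and w: "w \<in> gV Q" and "path_lang Q w (lang G' s) u"
  shows "\<exists>P. horn_derives H' P Q \<and> path_lang P w (lang (G' - GH H') s) u"
proof -
  obtain t where t: "t \<in> lang G' s" "path Q w t u"
    using assms(5) unfolding path_lang_def by blast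
  obtain s' where s': "s' \<in> lang (G' - GH H') s" "t \<in> lang (G' \<inter> GH H') s'"
    using lang_fracture[OF fr sub t(1)] by blast
  have "\<forall>p\<in>G' \<inter> GH H'. horn_of p \<in> H'"
    using fracturable_horn_of_mem[OF fr] sub by blast
  then obtain P where "horn_derives H' P Q" "path P w s' u"
    using horn_derives_path_of_lang[OF s'(2) _ wf w t(2)] by blast
  then show ?thesis using s'(1) unfolding path_lang_def by blast
qed

lemma horn_derives_fracture_edges:
  assumes fr: "fracturable (Hset (Gsys_init C)) H'" and edges: "cE C \<subseteq> cV C \<times> cV C"
    and wf: "gseq_wf G" and sat: "satisfies G C"
    and "finite F" and "F \<subseteq> cE C"
  shows "\<exists>Q. horn_derives H' Q G \<and>
           (\<forall>(w, u)\<in>F. path_lang Q w (lang (fst (cL C (w, u)) - GH H') [Fwd (snd (cL C (w, u)))]) u)"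
  using assms(5,6)
proof (induction F rule: finite_induct)
  case empty
  then show ?case using horn_derives_refl by blast
next
  case (insert e F)
  obtain w u where e: "e = (w, u)" by fastforce
  obtain Q where Q: "horn_derives H' Q G" "\<forall>(w, u)\<in>F. path_lang Q w (lang (fst (cL C (w, u)) - GH H') [Fwd (snd (cL C (w, u)))]) u"
    using insert.IH insert.prems by blast
  have wfQ: "gseq_wf Q" and VQ: "gV Q = gV G" and EQ: "\<forall>a. gE G a \<subseteq> gE Q a"
    using horn_derives_extends[OF Q(1) wf] by simp_all
  have sub: "fst (cL C (w, u)) \<subseteq> Gsys_init C" using insert.prems e by (auto simp: Gsys_init_def)
  have "w \<in> cV C" using edges insert.prems e by auto
  then have w: "w \<in> gV Q" using VQ sat by (auto simp: satisfies_def)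
  have "path_lang G w (lang (fst (cL C (w, u))) [Fwd (snd (cL C (w, u)))]) u"
    using sat insert.prems e by (simp add: satisfies_def)
  then obtain P where P: "horn_derives H' P Q" "path_lang P w (lang (fst (cL C (w, u)) - GH H') [Fwd (snd (cL C (w, u)))]) u"
    using path_lang_fracture[OF fr sub wfQ w path_lang_mono[OF EQ]] by blast
  have "\<forall>a. gE Q a \<subseteq> gE P a" using horn_derives_extends[OF P(1) wfQ] by simp
  then have "\<forall>(w, u)\<in>F. path_lang P w (lang (fst (cL C (w, u)) - GH H') [Fwd (snd (cL C (w, u)))]) u" using Q(2) path_lang_mono by fast
  then show ?case using P e horn_derives_trans[OF P(1) Q(1)] by auto
qed

lemma satisfies_fracture:
  assumes C: "constraint_wf C" and fr: "fracturable (Hset (Gsys_init C)) H'"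
    and wf: "gseq_wf G" and sat: "satisfies G C"
  shows "\<exists>G0. horn_derives H' G0 G \<and> satisfies G0 (fracture C (GH H'))"
proof -
  have "finite (cV C)" and edges: "cE C \<subseteq> cV C \<times> cV C"
    using C by (simp_all add: constraint_wf_def is_tree_def)
  then have "finite (cE C)" by (blast intro: finite_subset)
  then obtain G0 where G0: "horn_derives H' G0 G"
    "\<forall>(w, u)\<in>cE C. path_lang G0 w (lang (fst (cL C (w, u)) - GH H') [Fwd (snd (cL C (w, u)))]) u"
    using horn_derives_fracture_edges[OF fr edges wf sat] by blast
  have "cV C \<subseteq> gV G0"
    using horn_derives_extends[OF G0(1) wf] sat by (simp add: satisfies_def)
  then have "satisfies G0 (fracture C (GH H'))"
    unfolding satisfies_def fracture_def using G0(2) by auto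
  then show ?thesis using G0(1) by blast
qed

lemma init_concl_transfer:
  assumes "init_concl C R G" and "gseq_wf G0" and "gV G0 = gV G" and "gL G0 = gL G"
    and "satisfies G0 C'" and "cV C' = cV C"
  shows "init_concl C' R G0"
proof -
  have "Delta G0 = Delta G" using assms(3,4) by (simp add: Delta_def)
  then show ?thesis using assms unfolding init_concl_def by simp
qed

theorem mainTheorem8:
  fixes C :: "('u, 'e::finite) constraint"
    and R :: "('s::countable list \<times> ('u \<times> 's) set) set"
    and H H' :: "'e horn set"
  assumes "infinite (UNIV :: 's set)"
    and "constraint_wf C"
    and "\<forall>(l, D)\<in>R. length l = card (cV C)"
    and "H = Hset (Gsys_init C)"
    and "fracturable H H'"
  shows "\<forall>G :: ('u, 'e, 's) gseq. init_concl C R G \<longrightarrow>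
           (\<exists>G0. init_concl (fracture C (GH H')) R G0 \<and> horn_derives H' G0 G)"
proof (intro allI impI)
  fix G :: "('u, 'e, 's) gseq"
  assume G: "init_concl C R G"
  have fr: "fracturable (Hset (Gsys_init C)) H'" using assms(4,5) by simp
  from G have "gseq_wf G" "satisfies G C" by (simp_all add: init_concl_def)
  then obtain G0 where G0: "horn_derives H' G0 G" "satisfies G0 (fracture C (GH H'))"
    using satisfies_fracture[OF assms(2) fr] by blast
  have "gseq_wf G0" "gV G0 = gV G" "gL G0 = gL G"
    using horn_derives_extends[OF G0(1) \<open>gseq_wf G\<close>] by simp_all
  moreover have "cV (fracture C (GH H')) = cV C" by (simp add: fracture_def)
  ultimately have "init_concl (fracture C (GH H')) R G0"
    using init_concl_transfer[OF G _ _ _ G0(2)] by blast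
  then show "\<exists>G0. init_concl (fracture C (GH H')) R G0 \<and> horn_derives H' G0 G"
    using G0(1) by blast
qed

end
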